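(* Let $p\ge2$. The probabilistic frame potential $PFP(\mu)=\iint\langle x,y\rangle^2\,d\mu(x)\,d\mu(y)$ is strongly differentiable at every $\mu\in P_p(\mathbb{R}^d)$, with gradient plan $(\iota,4S_\mu)_\#\mu$.
   Context: $P_p(\mathbb{R}^d)$ is the set of Borel probability measures on $\mathbb{R}^d$ with finite $p$-th moment; $S_\mu=\int yy^\top d\mu(y)$ is the frame operator, viewed as the linear map $x\mapsto S_\mu x$; $\iota$ is the identity map and $(\iota,g)_\#\mu$ the pushforward of $\mu$ under $x\mapsto(x,g(x))$. Let $q=p/(p-1)$. For $\gamma\in P(\mathbb{R}^d\times\mathbb{R}^d)$ and $\nu\in P_p(\mathbb{R}^d)$, $\Gamma(\gamma,\nu)$ denotes the set of probability measures $\beta$ on $(\mathbb{R}^d)^3$ with $(\pi^1,\pi^2)_\#\beta=\gamma$ and $\pi^3_\#\beta=\nu$, and for $\mu=\pi^1_\#\gamma$, $C_{p,\beta}(\mu,\nu)=\big(\iiint\|x_1-x_3\|^p\,d\beta\big)^{1/p}$. A functional $F:P_p(\mathbb{R}^d)\to\mathbb{R}$ is strongly differentiable at $\mu$ with gradient plan $\gamma$ (where $\pi^1_\#\gamma=\mu$ and $\iint\|x_2\|^q d\gamma<\infty$) if for every $\nu\in P_p(\mathbb{R}^d)$ and every $\beta\in\Gamma(\gamma,\nu)$, $F(\nu)-F(\mu)=\iiint\langle x_2,x_3-x_1\rangle\,d\beta(x_1,x_2,x_3)+R_\beta$, where $|R_\beta|\le\omega(C_{p,\beta}(\mu,\nu))$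 for a function $\omega$ depending only on $\mu$ with $\omega(r)/r\to0$ as $r\to0$. *)

theory Defs
  imports "HOL-Probability.Probability"
begin

definition Pp :: "real \<Rightarrow> 'a::euclidean_space measure set" where
  "Pp p = {\<mu>. prob_space \<mu> \<and> sets \<mu> = sets borel \<and> integrable \<mu> (\<lambda>x. norm x powr p)}"

definition frame_op :: "'a::euclidean_space measure \<Rightarrow> 'a \<Rightarrow> 'a" where
  "frame_op \<mu> x = (\<integral>y. (y \<bullet> x) *\<^sub>R y \<partial>\<mu>)"

definition PFP :: "'a::euclidean_space measure \<Rightarrow> real" where
  "PFP \<mu> = (\<integral>x. (\<integral>y. (x \<bullet> y)\<^sup>2 \<partial>\<mu>) \<partial>\<mu>)"

definition Gamma :: "('a::euclidean_space \<times> 'a) measure \<Rightarrow> 'a measure \<Rightarrow> ('a \<times> 'a \<times> 'a) measure set" where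
  "Gamma \<gamma> \<nu> = {\<beta>. prob_space \<beta> \<and> sets \<beta> = sets borel \<and>
      distr \<beta> borel (\<lambda>(x1, x2, x3). (x1, x2)) = \<gamma> \<and>
      distr \<beta> borel (\<lambda>(x1, x2, x3). x3) = \<nu>}"

definition Cpb :: "real \<Rightarrow> ('a::euclidean_space \<times> 'a \<times> 'a) measure \<Rightarrow> real" where
  "Cpb p \<beta> = (\<integral>(x1, x2, x3). norm (x1 - x3) powr p \<partial>\<beta>) powr (1 / p)"

definition strongly_diff ::
  "real \<Rightarrow> ('a::euclidean_space measure \<Rightarrow> real) \<Rightarrow> 'a measure \<Rightarrow> ('a \<times> 'a) measure \<Rightarrow> bool" where
  "strongly_diff p F \<mu> \<gamma> \<longleftrightarrow>
     prob_space \<gamma> \<and> sets \<gamma> = sets borel \<and> distr \<gamma> borel fst = \<mu> \<and>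
     integrable \<gamma> (\<lambda>(x1, x2). norm x2 powr (p / (p - 1))) \<and>
     (\<exists>\<omega>::real \<Rightarrow> real. ((\<lambda>r. \<omega> r / r) \<longlongrightarrow> 0) (at_right 0) \<and>
        (\<forall>\<nu>\<in>Pp p. \<forall>\<beta>\<in>Gamma \<gamma> \<nu>.
           \<bar>F \<nu> - F \<mu> - (\<integral>(x1, x2, x3). x2 \<bullet> (x3 - x1) \<partial>\<beta>)\<bar> \<le> \<omega> (Cpb p \<beta>)))"

end

theory Submission
  imports Defs
begin

text \<open>Let \<open>m\<^sub>i\<^sub>j = \<integral> x\<^sub>i x\<^sub>j d\<mu>\<close> be the matrix of \<open>S\<^sub>\<mu>\<close>, so that \<open>PFP \<mu> = \<Sum>\<^sub>i\<^sub>j m\<^sub>i\<^sub>j\<^sup>2\<close>.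
  For a coupling \<open>\<beta>\<close> of the plan with \<open>\<nu>\<close>, let \<open>X\<close>, \<open>Y\<close> be its first and third coordinates and
  \<open>E = Y - X\<close>. The second-moment matrix of \<open>\<nu>\<close> is \<open>m + N + N\<^sup>T + Q\<close> with \<open>N\<^sub>i\<^sub>j = \<integral> X\<^sub>i E\<^sub>j\<close>
  and \<open>Q\<^sub>i\<^sub>j = \<integral> E\<^sub>i E\<^sub>j\<close>. As \<open>m\<close> is symmetric, the part of \<open>PFP \<nu> - PFP \<mu>\<close> linear in \<open>N\<close> is
  \<open>4 \<Sum>\<^sub>i\<^sub>j m\<^sub>i\<^sub>j N\<^sub>i\<^sub>j = \<integral> \<langle>4 S\<^sub>\<mu> X, E\<rangle>\<close>, the pairing with the plan \<open>(x, 4 S\<^sub>\<mu> x)\<close>. The rest is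
  quadratic in \<open>N\<close> and \<open>Q\<close>. With \<open>a = \<integral>|X|\<^sup>2\<close> and \<open>c = \<integral>|E|\<^sup>2\<close>, Cauchy-Schwarz bounds the
  entries of \<open>N\<close> by \<open>sqrt (a c)\<close>, so the remainder is \<open>O(c + c\<^sup>2)\<close>; Lyapunov's inequality
  (\<open>p \<ge> 2\<close>) gives \<open>c \<le> (Cpb p \<beta>)\<^sup>2\<close>, which makes the remainder \<open>o(Cpb p \<beta>)\<close>.\<close>

section \<open>Moment inequalities\<close>

lemma powr_le_one_plus_powr:
  fixes z a b :: real
  assumes "0 \<le> z" "0 \<le> a" "a \<le> b"
  shows "z powr a \<le> 1 + z powr b"
proof (cases "z \<le> 1")
  case True
  then have "z powr a \<le> 1"
    using assms by (metis powr_one_eq_one powr_mono2)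
  then show ?thesis using powr_ge_zero[of z b] by linarith
next
  case False
  then have "z powr a \<le> z powr b" using assms by (intro powr_mono) auto
  then show ?thesis by simp
qed

lemma integrable_powr_le_powr:
  fixes f :: "'m \<Rightarrow> real"
  assumes "finite_measure M" "f \<in> borel_measurable M" "\<And>x. 0 \<le> f x"
    and "integrable M (\<lambda>x. f x powr b)" "0 \<le> a" "a \<le> b"
  shows "integrable M (\<lambda>x. f x powr a)"
proof (rule Bochner_Integration.integrable_bound)
  show "integrable M (\<lambda>x. 1 + f x powr b)"
    using assms(1,4) by (intro Bochner_Integration.integrable_add finite_measure.integrable_const)
  show "(\<lambda>x. f x powr a) \<in> borel_measurable M"
    using assms(2) by measurable
  show "AE x in M. norm (f x powr a) \<le> norm (1 + f x powr b)"
    using powr_le_one_plus_powr[OF assms(3) assms(5,6)] by (intro AE_I2) simp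
qed

lemma integrable_norm_square_of_powr:
  fixes X :: "'m \<Rightarrow> 'a::real_normed_vector"
  assumes "finite_measure M" "X \<in> borel_measurable M"
    and "integrable M (\<lambda>x. norm (X x) powr p)" "2 \<le> p"
  shows "integrable M (\<lambda>x. norm (X x) ^ 2)"
  using integrable_powr_le_powr[OF assms(1) _ _ assms(3), of 2] assms(2,4)
  by (simp add: powr_realpow')

lemma Pp_integrable_norm_square:
  fixes \<mu> :: "'a::euclidean_space measure"
  assumes "2 \<le> p" "\<mu> \<in> Pp p"
  shows "integrable \<mu> (\<lambda>x. norm x ^ 2)"
  using assms integrable_norm_square_of_powr[OF prob_space.finite_measure, of \<mu> "\<lambda>x. x" p]
  by (simp add: Pp_def measurable_ident_sets)

lemma Cauchy_Schwarz_integral: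
  fixes f g :: "'m \<Rightarrow> real"
  assumes [measurable]: "f \<in> borel_measurable M" "g \<in> borel_measurable M"
    and "\<And>x. 0 \<le> f x" "\<And>x. 0 \<le> g x"
    and "integrable M (\<lambda>x. f x ^ 2)" "integrable M (\<lambda>x. g x ^ 2)" "integrable M (\<lambda>x. f x * g x)"
  shows "(\<integral>x. f x * g x \<partial>M)\<^sup>2 \<le> (\<integral>x. f x ^ 2 \<partial>M) * (\<integral>x. g x ^ 2 \<partial>M)"
proof -
  have nn: "(\<integral>\<^sup>+x. ennreal (h x) \<partial>M) = ennreal (\<integral>x. h x \<partial>M)"
    if "integrable M h" "\<And>x. 0 \<le> h x" for h :: "'m \<Rightarrow> real"
    using that by (intro nn_integral_eq_integral) auto
  have fg: "(\<integral>\<^sup>+x. ennreal (f x) * ennreal (g x) \<partial>M) = ennreal (\<integral>x. f x * g x \<partial>M)"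
    using assms(3,4,7) by (simp add: nn ennreal_mult[symmetric])
  have sq: "(\<integral>\<^sup>+x. ennreal (h x) ^ 2 \<partial>M) = ennreal (\<integral>x. h x ^ 2 \<partial>M)"
    if "integrable M (\<lambda>x. h x ^ 2)" "\<And>x. 0 \<le> h x" for h :: "'m \<Rightarrow> real"
    using that by (simp add: nn ennreal_power)
  have "(\<integral>\<^sup>+x. ennreal (f x) * ennreal (g x) \<partial>M)\<^sup>2
      \<le> (\<integral>\<^sup>+x. ennreal (f x) ^ 2 \<partial>M) * (\<integral>\<^sup>+x. ennreal (g x) ^ 2 \<partial>M)"
    by (rule Cauchy_Schwarz_nn_integral) measurable
  then have "ennreal ((\<integral>x. f x * g x \<partial>M)\<^sup>2) \<le> ennreal ((\<integral>x. f x ^ 2 \<partial>M) * (\<integral>x. g x ^ 2 \<partial>M))"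
    unfolding fg sq[OF assms(5,3)] sq[OF assms(6,4)]
    using assms(3,4) by (simp add: ennreal_power ennreal_mult integral_nonneg_AE)
  then show ?thesis
    using assms(3,4) by (subst (asm) ennreal_le_iff) (auto intro!: mult_nonneg_nonneg integral_nonneg_AE)
qed

lemma powr_ge_tangent:
  fixes r c x :: real
  assumes "1 \<le> r" "0 < c" "0 \<le> x"
  shows "c powr r + r * c powr (r - 1) * (x - c) \<le> x powr r"
proof (cases "x = 0")
  case True
  have "c powr r = c powr (r - 1) * c"
    using assms(2) by (simp add: powr_diff)
  then have "c powr r + r * c powr (r - 1) * (x - c) = c powr (r - 1) * c * (1 - r)"
    using True by (simp add: algebra_simps)
  also have "\<dots> \<le> 0"
    using assms(1,2) by (intro mult_nonneg_nonpos) auto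
  finally show ?thesis using True by simp
next
  case False
  then have "r * c powr (r - 1) * (x - c) \<le> x powr r - c powr r"
    using assms
    by (intro convex_on_imp_above_tangent[where A = "{0<..}", OF powr_convex])
       (auto intro!: derivative_eq_intros simp: interior_open)
  then show ?thesis by simp
qed

text \<open>The library's Jensen inequality needs an open interval containing the
  values of \<open>h\<^sup>2\<close>, so we integrate the tangent of \<open>t \<mapsto> t powr (p/2)\<close> at \<open>\<integral>h\<^sup>2\<close> instead.\<close>
lemma integral_square_le_powr:
  fixes h :: "'m \<Rightarrow> real"
  assumes "prob_space M" "2 \<le> p" "\<And>x. 0 \<le> h x"
    and "integrable M (\<lambda>x. h x ^ 2)" "integrable M (\<lambda>x. h x powr p)"
  shows "(\<integral>x. h x ^ 2 \<partial>M) \<le> (\<integral>x. h x powr p \<partial>M) powr (2 / p)"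
proof -
  interpret prob_space M by fact
  define c where "c = (\<integral>x. h x ^ 2 \<partial>M)"
  define r where "r = p / 2"
  have "c \<ge> 0" unfolding c_def by (intro integral_nonneg_AE) auto
  show ?thesis
  proof (cases "c = 0")
    case True then show ?thesis by (simp add: c_def)
  next
    case False
    with \<open>c \<ge> 0\<close> have "0 < c" by simp
    have "r \<ge> 1" using assms(2) by (simp add: r_def)
    have pw: "h x powr p = (h x ^ 2) powr r" for x
    proof -
      have "h x ^ 2 = h x powr 2" using assms(3)[of x] by (simp add: powr_realpow')
      then show ?thesis by (simp add: powr_powr r_def)
    qed
    have "(\<integral>x. c powr r + r * c powr (r - 1) * (h x ^ 2 - c) \<partial>M) = c powr r"
      using assms(4) by (simp add: c_def prob_space)
    moreover have "(\<integral>x. c powr r + r * c powr (r - 1) * (h x ^ 2 - c) \<partial>M) \<le> (\<integral>x. h x powr p \<partial>M)"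
    proof (rule integral_mono)
      show "integrable M (\<lambda>x. c powr r + r * c powr (r - 1) * (h x ^ 2 - c))"
        using assms(4) by simp
      show "c powr r + r * c powr (r - 1) * (h x ^ 2 - c) \<le> h x powr p" for x
        unfolding pw by (rule powr_ge_tangent[OF \<open>r \<ge> 1\<close> \<open>0 < c\<close>]) simp
    qed fact
    ultimately have "c powr r \<le> (\<integral>x. h x powr p \<partial>M)" by simp
    then have "(c powr r) powr (2 / p) \<le> (\<integral>x. h x powr p \<partial>M) powr (2 / p)"
      using assms(2) by (intro powr_mono2) auto
    moreover have "(c powr r) powr (2 / p) = c"
      using assms(2) \<open>0 < c\<close> by (simp add: r_def powr_powr)
    ultimately show ?thesis by (simp add: c_def)
  qed
qed

lemma integrable_norm_mult_norm:
  fixes X Y :: "'m \<Rightarrow> 'a::real_normed_vector"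
  assumes "X \<in> borel_measurable M" "Y \<in> borel_measurable M"
    and "integrable M (\<lambda>t. norm (X t) ^ 2)" "integrable M (\<lambda>t. norm (Y t) ^ 2)"
  shows "integrable M (\<lambda>t. norm (X t) * norm (Y t))"
proof (rule Bochner_Integration.integrable_bound)
  show "integrable M (\<lambda>t. norm (X t) ^ 2 + norm (Y t) ^ 2)"
    using assms(3,4) by simp
  show "(\<lambda>t. norm (X t) * norm (Y t)) \<in> borel_measurable M"
    using assms(1,2) by measurable
  have "norm (X t) * norm (Y t) \<le> norm (X t) ^ 2 + norm (Y t) ^ 2" for t
    using sum_squares_bound[of "norm (X t)" "norm (Y t)"]
      mult_nonneg_nonneg[OF norm_ge_zero norm_ge_zero, of "X t" "Y t"] by linarith
  then show "AE t in M. norm (norm (X t) * norm (Y t)) \<le> norm (norm (X t) ^ 2 + norm (Y t) ^ 2)"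
    by (intro AE_I2) simp
qed

lemma integrable_norm_square_diff:
  fixes X Y :: "'m \<Rightarrow> 'a::euclidean_space"
  assumes "X \<in> borel_measurable M" "Y \<in> borel_measurable M"
    and "integrable M (\<lambda>t. norm (X t) ^ 2)" "integrable M (\<lambda>t. norm (Y t) ^ 2)"
  shows "integrable M (\<lambda>t. norm (Y t - X t) ^ 2)"
proof (rule Bochner_Integration.integrable_bound)
  show "integrable M (\<lambda>t. 2 * norm (X t) ^ 2 + 2 * norm (Y t) ^ 2)"
    using assms(3,4) by simp
  show "(\<lambda>t. norm (Y t - X t) ^ 2) \<in> borel_measurable M"
    using assms(1,2) by measurable
  have "norm (Y t - X t) ^ 2 \<le> 2 * norm (X t) ^ 2 + 2 * norm (Y t) ^ 2" for t
  proof -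
    have "norm (Y t - X t) ^ 2 \<le> (norm (X t) + norm (Y t)) ^ 2"
      using norm_triangle_ineq4[of "Y t" "X t"] by (intro power_mono) auto
    also have "\<dots> \<le> 2 * norm (X t) ^ 2 + 2 * norm (Y t) ^ 2"
      using sum_squares_bound[of "norm (X t)" "norm (Y t)"] by (simp add: power2_sum)
    finally show ?thesis .
  qed
  then show "AE t in M. norm (norm (Y t - X t) ^ 2) \<le> norm (2 * norm (X t) ^ 2 + 2 * norm (Y t) ^ 2)"
    by (intro AE_I2) simp
qed

lemma norm_diff_powr_le:
  fixes x y :: "'a::real_normed_vector"
  assumes "0 < p"
  shows "norm (y - x) powr p \<le> 2 powr p * (norm x powr p + norm y powr p)"
proof -
  have "norm (y - x) powr p \<le> (2 * max (norm x) (norm y)) powr p"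
    using assms norm_triangle_ineq4[of y x] by (intro powr_mono2) auto
  also have "\<dots> = 2 powr p * max (norm x) (norm y) powr p"
    by (simp add: powr_mult)
  also have "max (norm x) (norm y) powr p \<le> norm x powr p + norm y powr p"
    by (simp add: max_def)
  finally show ?thesis by simp
qed

lemma integrable_norm_diff_powr:
  fixes X Y :: "'m \<Rightarrow> 'a::euclidean_space"
  assumes "X \<in> borel_measurable M" "Y \<in> borel_measurable M"
    and "integrable M (\<lambda>t. norm (X t) powr p)" "integrable M (\<lambda>t. norm (Y t) powr p)" "0 < p"
  shows "integrable M (\<lambda>t. norm (Y t - X t) powr p)"
proof (rule Bochner_Integration.integrable_bound)
  show "integrable M (\<lambda>t. 2 powr p * (norm (X t) powr p + norm (Y t) powr p))"
    using assms(3,4) by simp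
  show "(\<lambda>t. norm (Y t - X t) powr p) \<in> borel_measurable M"
    using assms(1,2) by measurable
  show "AE t in M. norm (norm (Y t - X t) powr p) \<le> norm (2 powr p * (norm (X t) powr p + norm (Y t) powr p))"
    using norm_diff_powr_le[OF assms(5)] by (intro AE_I2) simp
qed

section \<open>Second moments and the frame operator\<close>

lemma abs_inner_mult_inner_le:
  fixes x y u v :: "'a::real_inner"
  shows "\<bar>(x \<bullet> u) * (y \<bullet> v)\<bar> \<le> norm u * norm v * (norm x * norm y)"
proof -
  have "\<bar>(x \<bullet> u) * (y \<bullet> v)\<bar> \<le> (norm x * norm u) * (norm y * norm v)"
    unfolding abs_mult by (intro mult_mono Cauchy_Schwarz_ineq2) auto
  then show ?thesis by (simp add: ac_simps)
qed

lemma integrable_inner_mult_inner: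
  fixes X Y :: "'m \<Rightarrow> 'a::euclidean_space"
  assumes "X \<in> borel_measurable M" "Y \<in> borel_measurable M"
    and "integrable M (\<lambda>t. norm (X t) ^ 2)" "integrable M (\<lambda>t. norm (Y t) ^ 2)"
  shows "integrable M (\<lambda>t. (X t \<bullet> u) * (Y t \<bullet> v))"
proof (rule Bochner_Integration.integrable_bound)
  show "integrable M (\<lambda>t. norm u * norm v * (norm (X t) * norm (Y t)))"
    using integrable_norm_mult_norm[OF assms] by simp
  show "(\<lambda>t. (X t \<bullet> u) * (Y t \<bullet> v)) \<in> borel_measurable M"
    using assms(1,2) by measurable
  show "AE t in M. norm ((X t \<bullet> u) * (Y t \<bullet> v)) \<le> norm (norm u * norm v * (norm (X t) * norm (Y t)))"
    using abs_inner_mult_inner_le by (intro AE_I2) (simp add: abs_mult)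
qed

definition cross_moment :: "'m measure \<Rightarrow> ('m \<Rightarrow> 'a::euclidean_space) \<Rightarrow> ('m \<Rightarrow> 'a) \<Rightarrow> 'a \<Rightarrow> 'a \<Rightarrow> real"
  where "cross_moment M X Y i j = (\<integral>t. (X t \<bullet> i) * (Y t \<bullet> j) \<partial>M)"

lemma abs_cross_moment_le:
  fixes X Y :: "'m \<Rightarrow> 'a::euclidean_space"
  assumes "X \<in> borel_measurable M" "Y \<in> borel_measurable M"
    and "integrable M (\<lambda>t. norm (X t) ^ 2)" "integrable M (\<lambda>t. norm (Y t) ^ 2)"
    and "i \<in> Basis" "j \<in> Basis"
  shows "\<bar>cross_moment M X Y i j\<bar> \<le> (\<integral>t. norm (X t) * norm (Y t) \<partial>M)"
  unfolding cross_moment_def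
proof (rule order_trans[OF integral_abs_bound integral_mono])
  show "integrable M (\<lambda>t. \<bar>(X t \<bullet> i) * (Y t \<bullet> j)\<bar>)"
    using integrable_inner_mult_inner[OF assms(1-4)] by (rule integrable_abs)
  show "integrable M (\<lambda>t. norm (X t) * norm (Y t))"
    by (rule integrable_norm_mult_norm[OF assms(1-4)])
  show "\<bar>(X t \<bullet> i) * (Y t \<bullet> j)\<bar> \<le> norm (X t) * norm (Y t)" for t
    using abs_inner_mult_inner_le[of "X t" i "Y t" j] assms(5,6) by simp
qed

lemma integral_inner_mult_inner:
  fixes X Y :: "'m \<Rightarrow> 'a::euclidean_space"
  assumes "X \<in> borel_measurable M" "Y \<in> borel_measurable M"
    and "integrable M (\<lambda>t. norm (X t) ^ 2)" "integrable M (\<lambda>t. norm (Y t) ^ 2)"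
  shows "(\<integral>t. (X t \<bullet> u) * (Y t \<bullet> v) \<partial>M)
    = (\<Sum>i\<in>Basis. \<Sum>j\<in>Basis. (u \<bullet> i) * (v \<bullet> j) * cross_moment M X Y i j)"
proof -
  have "(X t \<bullet> u) * (Y t \<bullet> v) = (\<Sum>i\<in>Basis. \<Sum>j\<in>Basis. (u \<bullet> i) * (v \<bullet> j) * ((X t \<bullet> i) * (Y t \<bullet> j)))" for t
    by (subst (1 2) euclidean_inner) (simp add: sum_product ac_simps)
  then show ?thesis
    using integrable_inner_mult_inner[OF assms]
    by (simp add: cross_moment_def integral_sum integrable_sum)
qed

lemma cross_moment_add:
  fixes X Y :: "'m \<Rightarrow> 'a::euclidean_space"
  assumes "X \<in> borel_measurable M" "Y \<in> borel_measurable M"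
    and "integrable M (\<lambda>t. norm (X t) ^ 2)" "integrable M (\<lambda>t. norm (Y t) ^ 2)"
  shows "cross_moment M (\<lambda>t. X t + Y t) (\<lambda>t. X t + Y t) i j
    = cross_moment M X X i j + cross_moment M X Y i j + cross_moment M X Y j i + cross_moment M Y Y i j"
proof -
  have "(\<lambda>t. ((X t + Y t) \<bullet> i) * ((X t + Y t) \<bullet> j)) = (\<lambda>t. ((X t \<bullet> i) * (X t \<bullet> j) + (X t \<bullet> i) * (Y t \<bullet> j))
      + ((X t \<bullet> j) * (Y t \<bullet> i) + (Y t \<bullet> i) * (Y t \<bullet> j)))"
    by (simp add: inner_add_left algebra_simps)
  then show ?thesis
    using integrable_inner_mult_inner[OF assms(1,1,3,3)] integrable_inner_mult_inner[OF assms(1,2,3,4)]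
      integrable_inner_mult_inner[OF assms(2,2,4,4)]
    by (simp add: cross_moment_def)
qed

lemma frame_op_inner_eq_integral:
  fixes M :: "'a::euclidean_space measure"
  assumes "sets M = sets borel" "integrable M (\<lambda>y. norm y ^ 2)"
  shows "frame_op M x \<bullet> v = (\<integral>y. (y \<bullet> x) * (y \<bullet> v) \<partial>M)"
proof -
  have meas: "(\<lambda>y. y) \<in> borel_measurable M"
    using assms(1) by (rule measurable_ident_sets)
  have int: "integrable M (\<lambda>y. (y \<bullet> x) *\<^sub>R y)"
  proof (rule Bochner_Integration.integrable_bound)
    show "integrable M (\<lambda>y. norm x * norm y ^ 2)"
      using assms(2) by simp
    show "(\<lambda>y. (y \<bullet> x) *\<^sub>R y) \<in> borel_measurable M"
      using meas by measurable
    have "\<bar>y \<bullet> x\<bar> * norm y \<le> norm x * norm y ^ 2" for y :: 'a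
      using mult_right_mono[OF Cauchy_Schwarz_ineq2[of y x] norm_ge_zero[of y]]
      by (simp add: power2_eq_square ac_simps)
    then show "AE y in M. norm ((y \<bullet> x) *\<^sub>R y) \<le> norm (norm x * norm y ^ 2)"
      by (intro AE_I2) simp
  qed
  have "(\<integral>y. ((y \<bullet> x) *\<^sub>R y) \<bullet> v \<partial>M) = frame_op M x \<bullet> v"
    unfolding frame_op_def by (rule integral_inner_left[OF int])
  then show ?thesis by simp
qed

lemma frame_op_inner:
  fixes M :: "'a::euclidean_space measure"
  assumes "sets M = sets borel" "integrable M (\<lambda>y. norm y ^ 2)"
  shows "frame_op M x \<bullet> v
    = (\<Sum>i\<in>Basis. \<Sum>j\<in>Basis. (x \<bullet> i) * (v \<bullet> j) * cross_moment M (\<lambda>y. y) (\<lambda>y. y) i j)"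
proof -
  have "(\<lambda>y. y) \<in> borel_measurable M"
    using assms(1) by (rule measurable_ident_sets)
  then show ?thesis
    using frame_op_inner_eq_integral[OF assms] integral_inner_mult_inner[of "\<lambda>y. y" M "\<lambda>y. y"] assms(2)
    by simp
qed

lemma bounded_linear_frame_op:
  fixes M :: "'a::euclidean_space measure"
  assumes "sets M = sets borel" "integrable M (\<lambda>y. norm y ^ 2)"
  shows "bounded_linear (frame_op M)"
proof -
  have "linear (frame_op M)"
  proof (rule linearI)
    show "frame_op M (x + y) = frame_op M x + frame_op M y" for x y
      by (rule euclidean_eqI)
        (simp add: frame_op_inner[OF assms] inner_add_left distrib_right sum.distrib)
    show "frame_op M (c *\<^sub>R x) = c *\<^sub>R frame_op M x" for c x
      by (rule euclidean_eqI) (simp add: frame_op_inner[OF assms] sum_distrib_left ac_simps)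
  qed
  then show ?thesis by (simp add: linear_conv_bounded_linear)
qed

lemma PFP_eq_sum_cross_moment:
  fixes M :: "'a::euclidean_space measure"
  assumes "sets M = sets borel" "integrable M (\<lambda>y. norm y ^ 2)"
  shows "PFP M = (\<Sum>i\<in>Basis. \<Sum>j\<in>Basis. (cross_moment M (\<lambda>y. y) (\<lambda>y. y) i j)\<^sup>2)"
proof -
  have meas: "(\<lambda>y. y) \<in> borel_measurable M"
    using assms(1) by (rule measurable_ident_sets)
  define m where "m = cross_moment M (\<lambda>y. y) (\<lambda>y. y)"
  have "(\<integral>y. (x \<bullet> y)\<^sup>2 \<partial>M) = (\<Sum>i\<in>Basis. \<Sum>j\<in>Basis. m i j * ((x \<bullet> i) * (x \<bullet> j)))" for x
    using frame_op_inner_eq_integral[OF assms, of x x] frame_op_inner[OF assms, of x x]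
    by (simp add: m_def power2_eq_square inner_commute ac_simps)
  then have "PFP M = (\<integral>x. (\<Sum>i\<in>Basis. \<Sum>j\<in>Basis. m i j * ((x \<bullet> i) * (x \<bullet> j))) \<partial>M)"
    by (simp add: PFP_def)
  also have "\<dots> = (\<Sum>i\<in>Basis. \<Sum>j\<in>Basis. m i j * m i j)"
    using integrable_inner_mult_inner[OF meas meas assms(2,2)]
    by (simp add: integral_sum integrable_sum m_def cross_moment_def)
  finally show ?thesis by (simp add: m_def power2_eq_square)
qed

section \<open>First-order expansion of the frame potential\<close>

lemma sum_square_perturbation:
  fixes m N E :: "'i \<Rightarrow> 'i \<Rightarrow> real"
  assumes "\<And>i j. m i j = m j i"
  shows "(\<Sum>i\<in>I. \<Sum>j\<in>I. (m i j + N i j + N j i + E i j)\<^sup>2) - (\<Sum>i\<in>I. \<Sum>j\<in>I. (m i j)\<^sup>2)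
      - 4 * (\<Sum>i\<in>I. \<Sum>j\<in>I. m i j * N i j)
    = (\<Sum>i\<in>I. \<Sum>j\<in>I. 2 * m i j * E i j + (N i j + N j i + E i j)\<^sup>2)"
proof -
  have swap: "(\<Sum>i\<in>I. \<Sum>j\<in>I. m i j * N j i) = (\<Sum>i\<in>I. \<Sum>j\<in>I. m i j * N i j)"
    by (subst sum.swap) (simp add: assms)
  have "(m i j + N i j + N j i + E i j)\<^sup>2 - (m i j)\<^sup>2
      = 2 * m i j * E i j + (N i j + N j i + E i j)\<^sup>2 + 2 * (m i j * N i j) + 2 * (m i j * N j i)" for i j
    by (simp add: power2_eq_square algebra_simps)
  then show ?thesis
    by (simp add: sum_subtractf[symmetric] sum.distrib sum_distrib_left[symmetric] swap)
qed

lemma perturbation_entry_bound: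
  fixes m e n1 n2 a b c :: real
  assumes "\<bar>m\<bar> \<le> a" "\<bar>e\<bar> \<le> c" "\<bar>n1\<bar> \<le> b" "\<bar>n2\<bar> \<le> b" "b\<^sup>2 \<le> a * c"
  shows "\<bar>2 * m * e + (n1 + n2 + e)\<^sup>2\<bar> \<le> 10 * a * c + 2 * c\<^sup>2"
proof -
  have "\<bar>n1 + n2 + e\<bar> \<le> 2 * b + c"
    using assms(2-4) by (simp add: abs_le_iff)
  then have "(n1 + n2 + e)\<^sup>2 \<le> (2 * b + c)\<^sup>2"
    using power_mono[of "\<bar>n1 + n2 + e\<bar>" "2 * b + c" 2] by simp
  also have "\<dots> \<le> 8 * b\<^sup>2 + 2 * c\<^sup>2"
    using sum_squares_bound[of "2 * b" c] by (simp add: power2_sum power_mult_distrib)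
  finally have "(n1 + n2 + e)\<^sup>2 \<le> 8 * (a * c) + 2 * c\<^sup>2"
    using assms(5) by linarith
  moreover have "\<bar>2 * m * e\<bar> \<le> 2 * (a * c)"
    using mult_mono[OF assms(1,2)] assms(1) by (simp add: abs_mult)
  ultimately show ?thesis
    using abs_triangle_ineq[of "2 * m * e" "(n1 + n2 + e)\<^sup>2"] by simp
qed

lemma
  fixes X :: "'m \<Rightarrow> 'a::euclidean_space"
  assumes "X \<in> borel_measurable M" "integrable M (\<lambda>t. norm (X t) ^ 2)"
  shows integrable_norm_square_distr: "integrable (distr M borel X) (\<lambda>y. norm y ^ 2)"
    and cross_moment_distr: "cross_moment (distr M borel X) (\<lambda>y. y) (\<lambda>y. y) i j = cross_moment M X X i j"
  using assms by (simp_all add: integrable_distr_eq integral_distr cross_moment_def)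

lemma PFP_distr:
  fixes X :: "'m \<Rightarrow> 'a::euclidean_space"
  assumes "X \<in> borel_measurable M" "integrable M (\<lambda>t. norm (X t) ^ 2)"
  shows "PFP (distr M borel X) = (\<Sum>i\<in>Basis. \<Sum>j\<in>Basis. (cross_moment M X X i j)\<^sup>2)"
  using PFP_eq_sum_cross_moment[OF _ integrable_norm_square_distr[OF assms]]
  by (simp add: cross_moment_distr[OF assms])

lemma frame_op_distr_inner:
  fixes X :: "'m \<Rightarrow> 'a::euclidean_space"
  assumes "X \<in> borel_measurable M" "integrable M (\<lambda>t. norm (X t) ^ 2)"
  shows "frame_op (distr M borel X) x \<bullet> v
    = (\<Sum>i\<in>Basis. \<Sum>j\<in>Basis. (x \<bullet> i) * (v \<bullet> j) * cross_moment M X X i j)"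
  using frame_op_inner[OF _ integrable_norm_square_distr[OF assms]]
  by (simp add: cross_moment_distr[OF assms])

lemma PFP_distr_remainder_bound:
  fixes X Y :: "'m \<Rightarrow> 'a::euclidean_space"
  assumes X: "X \<in> borel_measurable M" and Y: "Y \<in> borel_measurable M"
    and iX: "integrable M (\<lambda>t. norm (X t) ^ 2)" and iY: "integrable M (\<lambda>t. norm (Y t) ^ 2)"
  defines "a \<equiv> \<integral>t. norm (X t) ^ 2 \<partial>M" and "c \<equiv> \<integral>t. norm (Y t - X t) ^ 2 \<partial>M"
  shows "\<bar>PFP (distr M borel Y) - PFP (distr M borel X)
      - 4 * (\<integral>t. frame_op (distr M borel X) (X t) \<bullet> (Y t - X t) \<partial>M)\<bar>
    \<le> (real DIM('a))\<^sup>2 * (10 * a * c + 2 * c\<^sup>2)"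
proof -
  define E where "E = (\<lambda>t. Y t - X t)"
  have E: "E \<in> borel_measurable M" and iE: "integrable M (\<lambda>t. norm (E t) ^ 2)"
    using integrable_norm_square_diff[OF X Y iX iY] X Y by (simp_all add: E_def borel_measurable_diff)
  define m where "m = cross_moment M X X"
  define N where "N = cross_moment M X E"
  define Q where "Q = cross_moment M E E"
  define b where "b = (\<integral>t. norm (X t) * norm (E t) \<partial>M)"
  have "Y = (\<lambda>t. X t + E t)" by (simp add: E_def)
  then have PFP_Y: "PFP (distr M borel Y) = (\<Sum>i\<in>Basis. \<Sum>j\<in>Basis. (m i j + N i j + N j i + Q i j)\<^sup>2)"
    using PFP_distr[OF Y iY] cross_moment_add[OF X E iX iE] by (simp add: m_def N_def Q_def)
  have PFP_X: "PFP (distr M borel X) = (\<Sum>i\<in>Basis. \<Sum>j\<in>Basis. (m i j)\<^sup>2)"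
    using PFP_distr[OF X iX] by (simp add: m_def)
  have "(\<integral>t. frame_op (distr M borel X) (X t) \<bullet> E t \<partial>M)
      = (\<integral>t. (\<Sum>i\<in>Basis. \<Sum>j\<in>Basis. m i j * ((X t \<bullet> i) * (E t \<bullet> j))) \<partial>M)"
    by (simp add: frame_op_distr_inner[OF X iX] m_def ac_simps)
  also have "\<dots> = (\<Sum>i\<in>Basis. \<Sum>j\<in>Basis. m i j * N i j)"
    using integrable_inner_mult_inner[OF X E iX iE]
    by (simp add: integral_sum integrable_sum N_def cross_moment_def)
  finally have linear_term: "(\<integral>t. frame_op (distr M borel X) (X t) \<bullet> E t \<partial>M)
      = (\<Sum>i\<in>Basis. \<Sum>j\<in>Basis. m i j * N i j)" .
  have "m i j = m j i" for i j
    by (simp add: m_def cross_moment_def mult.commute)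
  then have remainder: "PFP (distr M borel Y) - PFP (distr M borel X)
      - 4 * (\<integral>t. frame_op (distr M borel X) (X t) \<bullet> (Y t - X t) \<partial>M)
    = (\<Sum>i\<in>Basis. \<Sum>j\<in>Basis. 2 * m i j * Q i j + (N i j + N j i + Q i j)\<^sup>2)"
    unfolding PFP_Y PFP_X linear_term[unfolded E_def] by (rule sum_square_perturbation)
  have "b\<^sup>2 \<le> a * c"
    using Cauchy_Schwarz_integral[of "\<lambda>t. norm (X t)" M "\<lambda>t. norm (E t)"] X E iX iE
      integrable_norm_mult_norm[OF X E iX iE]
    by (simp add: a_def b_def c_def E_def)
  then have entry: "\<bar>2 * m i j * Q i j + (N i j + N j i + Q i j)\<^sup>2\<bar> \<le> 10 * a * c + 2 * c\<^sup>2"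
    if "i \<in> Basis" "j \<in> Basis" for i j
    using that abs_cross_moment_le[OF X X iX iX] abs_cross_moment_le[OF X E iX iE]
      abs_cross_moment_le[OF E E iE iE]
    by (intro perturbation_entry_bound)
      (simp_all add: m_def N_def Q_def a_def b_def c_def E_def power2_eq_square)
  have "\<bar>\<Sum>i\<in>Basis. \<Sum>j\<in>Basis. 2 * m i j * Q i j + (N i j + N j i + Q i j)\<^sup>2\<bar>
      \<le> (\<Sum>i\<in>(Basis::'a set). \<Sum>j\<in>(Basis::'a set). 10 * a * c + 2 * c\<^sup>2)"
    using entry by (intro order_trans[OF sum_abs sum_mono] order_trans[OF sum_abs sum_mono]) auto
  then show ?thesis
    unfolding remainder by (simp add: power2_eq_square)
qed

section \<open>Couplings with a graph plan\<close>

lemma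
  fixes \<mu> :: "'a::euclidean_space measure" and g :: "'a \<Rightarrow> 'a"
  assumes "sets \<mu> = sets borel" "continuous_on UNIV g"
  shows distr_graph_fst: "distr (distr \<mu> borel (\<lambda>x. (x, g x))) borel fst = \<mu>"
    and AE_distr_graph: "AE z in distr \<mu> borel (\<lambda>x. (x, g x)). snd z = g (fst z)"
proof -
  have graph: "(\<lambda>x. (x, g x)) \<in> borel_measurable \<mu>"
    using assms by (simp add: measurable_cong_sets[OF assms(1) refl] borel_measurable_continuous_onI
        continuous_on_Pair continuous_on_id)
  have fst: "fst \<in> borel_measurable (borel :: ('a \<times> 'a) measure)"
    by (intro borel_measurable_continuous_onI continuous_intros)
  have "distr (distr \<mu> borel (\<lambda>x. (x, g x))) borel fst = distr \<mu> borel (\<lambda>x. x)"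
    by (simp add: distr_distr[OF fst graph] comp_def)
  also have "\<dots> = \<mu>"
    using assms(1) by (intro distr_id2) simp
  finally show "distr (distr \<mu> borel (\<lambda>x. (x, g x))) borel fst = \<mu>" .
  have "{z :: 'a \<times> 'a. snd z = g (fst z)} \<in> sets borel"
    using continuous_on_compose2[OF assms(2) continuous_on_fst[OF continuous_on_id]]
    by (intro borel_closed closed_Collect_eq continuous_intros) auto
  then show "AE z in distr \<mu> borel (\<lambda>x. (x, g x)). snd z = g (fst z)"
    using graph by (subst AE_distr_iff) auto
qed

lemma Gamma_distr_graph:
  fixes \<mu> \<nu> :: "'a::euclidean_space measure" and g :: "'a \<Rightarrow> 'a"
  assumes "sets \<mu> = sets borel" "continuous_on UNIV g" "\<beta> \<in> Gamma (distr \<mu> borel (\<lambda>x. (x, g x))) \<nu>"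
  shows "prob_space \<beta>" "sets \<beta> = sets borel"
    and "distr \<beta> borel fst = \<mu>" "distr \<beta> borel (\<lambda>t. snd (snd t)) = \<nu>"
    and "AE t in \<beta>. fst (snd t) = g (fst t)"
proof -
  show "prob_space \<beta>" and sets: "sets \<beta> = sets borel"
    using assms(3) by (simp_all add: Gamma_def)
  have "(\<lambda>(x1, x2, x3). (x1, x2)) = (\<lambda>t :: 'a \<times> 'a \<times> 'a. (fst t, fst (snd t)))"
    and "(\<lambda>(x1, x2, x3). x3) = (\<lambda>t :: 'a \<times> 'a \<times> 'a. snd (snd t))"
    by auto
  then have marginal12: "distr \<beta> borel (\<lambda>t. (fst t, fst (snd t))) = distr \<mu> borel (\<lambda>x. (x, g x))"
    and "distr \<beta> borel (\<lambda>t. snd (snd t)) = \<nu>"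
    using assms(3) by (simp_all add: Gamma_def)
  then show "distr \<beta> borel (\<lambda>t. snd (snd t)) = \<nu>" by simp
  have proj: "(\<lambda>t. (fst t, fst (snd t))) \<in> borel_measurable \<beta>"
    unfolding measurable_cong_sets[OF sets refl]
    by (intro borel_measurable_continuous_onI continuous_intros)
  have fst: "fst \<in> borel_measurable (borel :: ('a \<times> 'a) measure)"
    by (intro borel_measurable_continuous_onI continuous_intros)
  have "distr \<beta> borel fst = distr (distr \<beta> borel (\<lambda>t. (fst t, fst (snd t)))) borel fst"
    by (simp add: distr_distr[OF fst proj] comp_def)
  then show "distr \<beta> borel fst = \<mu>"
    unfolding marginal12 using distr_graph_fst[OF assms(1,2)] by simp
  have "AE z in distr \<beta> borel (\<lambda>t. (fst t, fst (snd t))). snd z = g (fst z)"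
    unfolding marginal12 by (rule AE_distr_graph[OF assms(1,2)])
  then show "AE t in \<beta>. fst (snd t) = g (fst t)"
    using AE_distrD[OF proj] by fastforce
qed

lemma integral_norm_diff_square_le_Cpb:
  fixes \<beta> :: "('a::euclidean_space \<times> 'a \<times> 'a) measure"
  assumes "prob_space \<beta>" "sets \<beta> = sets borel" "2 \<le> p"
    and "integrable \<beta> (\<lambda>t. norm (snd (snd t) - fst t) powr p)"
  shows "(\<integral>t. norm (snd (snd t) - fst t) ^ 2 \<partial>\<beta>) \<le> (Cpb p \<beta>)\<^sup>2"
proof -
  define I where "I = (\<integral>t. norm (snd (snd t) - fst t) powr p \<partial>\<beta>)"
  have integrand: "(\<lambda>(x1, x2, x3). norm (x1 - x3) powr p) = (\<lambda>t. norm (snd (snd t) - fst t) powr p)"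
    by (auto simp: norm_minus_commute)
  have Cpb: "Cpb p \<beta> = I powr (1 / p)"
    unfolding Cpb_def I_def integrand ..
  have "(\<lambda>t. snd (snd t) - fst t) \<in> borel_measurable \<beta>"
    unfolding measurable_cong_sets[OF assms(2) refl]
    by (intro borel_measurable_continuous_onI continuous_intros)
  then have "integrable \<beta> (\<lambda>t. norm (snd (snd t) - fst t) ^ 2)"
    using integrable_norm_square_of_powr[OF prob_space.finite_measure[OF assms(1)] _ assms(4,3)] by simp
  then have "(\<integral>t. norm (snd (snd t) - fst t) ^ 2 \<partial>\<beta>) \<le> I powr (2 / p)"
    unfolding I_def by (intro integral_square_le_powr[OF assms(1,3) _ _ assms(4)]) simp_all
  also have "\<dots> = (Cpb p \<beta>)\<^sup>2"
    unfolding Cpb by (simp add: powr_powr flip: powr_realpow')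
  finally show ?thesis .
qed

lemma integrable_distr_graph_norm_powr:
  fixes \<mu> :: "'a::euclidean_space measure" and T :: "'a \<Rightarrow> 'b::euclidean_space"
  assumes "finite_measure \<mu>" "sets \<mu> = sets borel" "bounded_linear T"
    and "integrable \<mu> (\<lambda>x. norm x ^ 2)" "0 \<le> q" "q \<le> 2"
  shows "integrable (distr \<mu> borel (\<lambda>x. (x, T x))) (\<lambda>(x1, x2). norm x2 powr q)"
proof -
  obtain K where K: "\<And>x. norm (T x) \<le> norm x * K"
    using bounded_linear.bounded[OF assms(3)] by blast
  have T: "T \<in> borel_measurable \<mu>"
    unfolding measurable_cong_sets[OF assms(2) refl]
    by (intro borel_measurable_continuous_onI linear_continuous_on assms(3))
  have "integrable \<mu> (\<lambda>x. norm (T x) ^ 2)"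
  proof (rule Bochner_Integration.integrable_bound)
    show "integrable \<mu> (\<lambda>x. K\<^sup>2 * norm x ^ 2)"
      using assms(4) by simp
    have "norm (T x) ^ 2 \<le> (norm x * K) ^ 2" for x
      using K[of x] by (intro power_mono) auto
    then show "AE x in \<mu>. norm (norm (T x) ^ 2) \<le> norm (K\<^sup>2 * norm x ^ 2)"
      by (intro AE_I2) (simp add: power_mult_distrib ac_simps)
  qed (use T in measurable)
  then have "integrable \<mu> (\<lambda>x. norm (T x) powr q)"
    using integrable_powr_le_powr[OF assms(1), of "\<lambda>x. norm (T x)" 2 q] T assms(5,6)
    by (simp add: powr_realpow')
  moreover have "(\<lambda>x. (x, T x)) \<in> borel_measurable \<mu>"
    using T assms(2) by (simp add: measurable_cong_sets[OF assms(2) refl] measurable_Pair)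
  moreover have "(\<lambda>z. norm (snd z) powr q) \<in> borel_measurable (borel :: ('a \<times> 'b) measure)"
    by (intro powr_real_measurable borel_measurable_continuous_onI continuous_intros
        borel_measurable_const)
  ultimately show ?thesis
    by (simp add: case_prod_beta integrable_distr_eq)
qed

lemma PFP_Gamma_remainder_bound:
  fixes \<mu> \<nu> :: "'a::euclidean_space measure"
  assumes p: "2 \<le> p" and \<mu>: "\<mu> \<in> Pp p" and \<nu>: "\<nu> \<in> Pp p"
    and \<beta>: "\<beta> \<in> Gamma (distr \<mu> borel (\<lambda>x. (x, 4 *\<^sub>R frame_op \<mu> x))) \<nu>"
  shows "\<bar>PFP \<nu> - PFP \<mu> - (\<integral>(x1, x2, x3). x2 \<bullet> (x3 - x1) \<partial>\<beta>)\<bar>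
    \<le> (real DIM('a))\<^sup>2 * (10 * (\<integral>x. norm x ^ 2 \<partial>\<mu>) * (Cpb p \<beta>)\<^sup>2 + 2 * ((Cpb p \<beta>)\<^sup>2)\<^sup>2)"
proof -
  have sets\<mu>: "sets \<mu> = sets borel" and p\<mu>: "integrable \<mu> (\<lambda>x. norm x powr p)"
    and p\<nu>: "integrable \<nu> (\<lambda>x. norm x powr p)"
    using \<mu> \<nu> by (simp_all add: Pp_def)
  have sq\<mu>: "integrable \<mu> (\<lambda>x. norm x ^ 2)" and sq\<nu>: "integrable \<nu> (\<lambda>x. norm x ^ 2)"
    using Pp_integrable_norm_square[OF p \<mu>] Pp_integrable_norm_square[OF p \<nu>] .
  define S where "S = frame_op \<mu>"
  have S: "bounded_linear S"
    unfolding S_def by (rule bounded_linear_frame_op[OF sets\<mu> sq\<mu>])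
  then have "continuous_on UNIV (\<lambda>x. 4 *\<^sub>R S x)"
    by (intro linear_continuous_on bounded_linear_const_scaleR)
  note \<beta>_props = Gamma_distr_graph[OF sets\<mu> this \<beta>[folded S_def]]
  define X where "X = (fst :: 'a \<times> 'a \<times> 'a \<Rightarrow> 'a)"
  define Y where "Y = (\<lambda>t :: 'a \<times> 'a \<times> 'a. snd (snd t))"
  have X: "X \<in> borel_measurable \<beta>" and Y: "Y \<in> borel_measurable \<beta>"
    unfolding X_def Y_def measurable_cong_sets[OF \<beta>_props(2) refl]
    by (intro borel_measurable_continuous_onI continuous_intros)+
  have \<mu>_eq: "distr \<beta> borel X = \<mu>" and \<nu>_eq: "distr \<beta> borel Y = \<nu>"
    using \<beta>_props(3,4) by (simp_all add: X_def Y_def)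
  have integrable_marginal: "integrable \<beta> (\<lambda>t. f (Z t))"
    if "distr \<beta> borel Z = \<rho>" "Z \<in> borel_measurable \<beta>" "integrable \<rho> f" "f \<in> borel_measurable borel"
    for Z :: "'a \<times> 'a \<times> 'a \<Rightarrow> 'a" and \<rho> and f :: "'a \<Rightarrow> real"
    using that integrable_distr_eq[of Z \<beta> borel f] by simp
  have sqX: "integrable \<beta> (\<lambda>t. norm (X t) ^ 2)" and sqY: "integrable \<beta> (\<lambda>t. norm (Y t) ^ 2)"
    using integrable_marginal[OF \<mu>_eq X sq\<mu>] integrable_marginal[OF \<nu>_eq Y sq\<nu>] by measurable
  have "integrable \<beta> (\<lambda>t. norm (X t) powr p)" "integrable \<beta> (\<lambda>t. norm (Y t) powr p)"
    using integrable_marginal[OF \<mu>_eq X p\<mu>] integrable_marginal[OF \<nu>_eq Y p\<nu>] by measurable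
  then have "integrable \<beta> (\<lambda>t. norm (Y t - X t) powr p)"
    using p by (intro integrable_norm_diff_powr X Y) auto
  then have c_le: "(\<integral>t. norm (Y t - X t) ^ 2 \<partial>\<beta>) \<le> (Cpb p \<beta>)\<^sup>2"
    using integral_norm_diff_square_le_Cpb[OF \<beta>_props(1,2) p] by (simp add: X_def Y_def)
  have "(\<lambda>(x1, x2, x3). x2 \<bullet> (x3 - x1)) = (\<lambda>t. fst (snd t) \<bullet> (Y t - X t))"
    by (auto simp: X_def Y_def)
  moreover have "(\<integral>t. fst (snd t) \<bullet> (Y t - X t) \<partial>\<beta>) = (\<integral>t. (4 *\<^sub>R S (X t)) \<bullet> (Y t - X t) \<partial>\<beta>)"
  proof (rule integral_cong_AE)
    have "continuous_on UNIV (\<lambda>t :: 'a \<times> 'a \<times> 'a. S (fst t))"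
      using continuous_on_compose2[OF linear_continuous_on[OF S] continuous_on_fst[OF continuous_on_id]]
      by blast
    then show "(\<lambda>t. (4 *\<^sub>R S (X t)) \<bullet> (Y t - X t)) \<in> borel_measurable \<beta>"
      unfolding X_def Y_def measurable_cong_sets[OF \<beta>_props(2) refl]
      by (intro borel_measurable_continuous_onI continuous_intros)
    show "(\<lambda>t. fst (snd t) \<bullet> (Y t - X t)) \<in> borel_measurable \<beta>"
      unfolding X_def Y_def measurable_cong_sets[OF \<beta>_props(2) refl]
      by (intro borel_measurable_continuous_onI continuous_intros)
    show "AE t in \<beta>. fst (snd t) \<bullet> (Y t - X t) = (4 *\<^sub>R S (X t)) \<bullet> (Y t - X t)"
      using \<beta>_props(5) by eventually_elim (simp add: X_def)
  qed
  ultimately have linear_term: "(\<integral>(x1, x2, x3). x2 \<bullet> (x3 - x1) \<partial>\<beta>)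
      = 4 * (\<integral>t. frame_op (distr \<beta> borel X) (X t) \<bullet> (Y t - X t) \<partial>\<beta>)"
    by (simp add: \<mu>_eq S_def)
  have "(\<integral>t. norm (X t) ^ 2 \<partial>\<beta>) = (\<integral>x. norm x ^ 2 \<partial>\<mu>)"
    using X by (simp flip: \<mu>_eq add: integral_distr)
  then have "\<bar>PFP \<nu> - PFP \<mu> - (\<integral>(x1, x2, x3). x2 \<bullet> (x3 - x1) \<partial>\<beta>)\<bar>
      \<le> (real DIM('a))\<^sup>2 * (10 * (\<integral>x. norm x ^ 2 \<partial>\<mu>) * (\<integral>t. norm (Y t - X t) ^ 2 \<partial>\<beta>)
        + 2 * (\<integral>t. norm (Y t - X t) ^ 2 \<partial>\<beta>)\<^sup>2)"
    using PFP_distr_remainder_bound[OF X Y sqX sqY] unfolding linear_term \<mu>_eq \<nu>_eq by simp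
  also have "\<dots> \<le> (real DIM('a))\<^sup>2 * (10 * (\<integral>x. norm x ^ 2 \<partial>\<mu>) * (Cpb p \<beta>)\<^sup>2 + 2 * ((Cpb p \<beta>)\<^sup>2)\<^sup>2)"
  proof -
    have "0 \<le> (\<integral>t. norm (Y t - X t) ^ 2 \<partial>\<beta>)" "0 \<le> (\<integral>x. norm x ^ 2 \<partial>\<mu>)"
      by (simp_all add: integral_nonneg_AE)
    then show ?thesis
      using c_le by (intro mult_left_mono add_mono power_mono) auto
  qed
  finally show ?thesis .
qed

lemma tendsto_square_quartic_div_at_right_0:
  fixes A B :: real
  shows "((\<lambda>r. (A * r\<^sup>2 + B * (r\<^sup>2)\<^sup>2) / r) \<longlongrightarrow> 0) (at_right 0)"
proof -
  have "((\<lambda>r::real. A * r + B * r ^ 3) \<longlongrightarrow> A * 0 + B * 0 ^ 3) (at_right 0)"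
    by (intro tendsto_intros)
  moreover have "eventually (\<lambda>r. A * r + B * r ^ 3 = (A * r\<^sup>2 + B * (r\<^sup>2)\<^sup>2) / r) (at_right 0)"
    using eventually_at_right_less[of "0::real"]
    by eventually_elim (simp add: field_simps power2_eq_square power3_eq_cube)
  ultimately show ?thesis
    by (simp add: Lim_transform_eventually)
qed

theorem mainTheorem6:
  fixes p :: real and \<mu> :: "'a::euclidean_space measure"
  assumes "p \<ge> 2" and "\<mu> \<in> Pp p"
  shows "strongly_diff p PFP \<mu> (distr \<mu> borel (\<lambda>x. (x, 4 *\<^sub>R frame_op \<mu> x)))"
proof -
  have sets\<mu>: "sets \<mu> = sets borel" and "prob_space \<mu>"
    using assms(2) by (simp_all add: Pp_def)
  have sq\<mu>: "integrable \<mu> (\<lambda>x. norm x ^ 2)"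
    using Pp_integrable_norm_square[OF assms] .
  have S: "bounded_linear (\<lambda>x. 4 *\<^sub>R frame_op \<mu> x)"
    by (intro bounded_linear_const_scaleR bounded_linear_frame_op sets\<mu> sq\<mu>)
  have graph: "(\<lambda>x. (x, 4 *\<^sub>R frame_op \<mu> x)) \<in> borel_measurable \<mu>"
    unfolding measurable_cong_sets[OF sets\<mu> refl]
    by (intro borel_measurable_continuous_onI continuous_on_Pair continuous_on_id linear_continuous_on S)
  define D where "D = (real DIM('a))\<^sup>2"
  define a where "a = (\<integral>x. norm x ^ 2 \<partial>\<mu>)"
  define \<omega> where "\<omega> r = D * (10 * a) * r\<^sup>2 + 2 * D * (r\<^sup>2)\<^sup>2" for r :: real
  show ?thesis
    unfolding strongly_diff_def
  proof (intro conjI exI[of _ \<omega>] ballI)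
    show "prob_space (distr \<mu> borel (\<lambda>x. (x, 4 *\<^sub>R frame_op \<mu> x)))"
      by (rule prob_space.prob_space_distr[OF \<open>prob_space \<mu>\<close> graph])
    show "distr (distr \<mu> borel (\<lambda>x. (x, 4 *\<^sub>R frame_op \<mu> x))) borel fst = \<mu>"
      by (rule distr_graph_fst[OF sets\<mu> linear_continuous_on[OF S]])
    show "integrable (distr \<mu> borel (\<lambda>x. (x, 4 *\<^sub>R frame_op \<mu> x))) (\<lambda>(x1, x2). norm x2 powr (p / (p - 1)))"
      using assms(1)
      by (intro integrable_distr_graph_norm_powr[OF prob_space.finite_measure[OF \<open>prob_space \<mu>\<close>] sets\<mu> S sq\<mu>])
        (simp_all add: field_simps)
    show "((\<lambda>r. \<omega> r / r) \<longlongrightarrow> 0) (at_right 0)"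
      unfolding \<omega>_def by (rule tendsto_square_quartic_div_at_right_0)
    show "\<bar>PFP \<nu> - PFP \<mu> - (\<integral>(x1, x2, x3). x2 \<bullet> (x3 - x1) \<partial>\<beta>)\<bar> \<le> \<omega> (Cpb p \<beta>)"
      if "\<nu> \<in> Pp p" "\<beta> \<in> Gamma (distr \<mu> borel (\<lambda>x. (x, 4 *\<^sub>R frame_op \<mu> x))) \<nu>" for \<nu> \<beta>
      using PFP_Gamma_remainder_bound[OF assms that] by (simp add: \<omega>_def D_def a_def algebra_simps)
  qed simp
qed

end
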